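(* Let $\mathfrak{G}$ be a Lie algebra over $\mathbb{K}$ and $I\subseteq\mathfrak{G}$ an ideal. Let $U$ and $U'$ be $\mathfrak{G}/I$-modules (regarded as $\mathfrak{G}$-modules), and let $W$ be a $\mathfrak{G}$-module on which $I$ acts densely and irreducibly with $\mathrm{End}_I(W)=\mathbb{K}$. Then every $\mathfrak{G}$-module homomorphism $U\otimes W\to U'\otimes W$ is of the form $g\otimes\mathrm{id}_W$ for a unique $g\in\mathrm{Hom}_{\mathfrak{G}}(U,U')$; that is, $\mathrm{Hom}_{\mathfrak{G}}(U\otimes W,U'\otimes W)=\mathrm{Hom}_{\mathfrak{G}}(U,U')$.
   Context: A Lie subalgebra $I$ of a Lie algebra $\mathfrak{G}$ acts densely on a $\mathfrak{G}$-module $W$ if for every finite set $\{w_1,\dots,w_n\}\subset W$ and every $h\in\mathfrak{G}$ there is $h'\in I$ with $h'w_i=hw_i$ for all $i$. $\mathbb{K}$ is a field of characteristic $0$. *)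

theory Defs
  imports Complex_Main "HOL-Library.Function_Algebras"
begin

definition lie_algebra :: "('k::field \<Rightarrow> 'g::ab_group_add \<Rightarrow> 'g) \<Rightarrow> ('g \<Rightarrow> 'g \<Rightarrow> 'g) \<Rightarrow> bool" where
  "lie_algebra sg br \<longleftrightarrow> vector_space sg
     \<and> (\<forall>x y z. br (x + y) z = br x z + br y z)
     \<and> (\<forall>c x y. br (sg c x) y = sg c (br x y))
     \<and> (\<forall>x y z. br x (y + z) = br x y + br x z)
     \<and> (\<forall>c x y. br x (sg c y) = sg c (br x y))
     \<and> (\<forall>x. br x x = 0)
     \<and> (\<forall>x y z. br x (br y z) + br y (br z x) + br z (br x y) = 0)"

definition lie_ideal :: "('k::field \<Rightarrow> 'g::ab_group_add \<Rightarrow> 'g) \<Rightarrow> ('g \<Rightarrow> 'g \<Rightarrow> 'g) \<Rightarrow> 'g set \<Rightarrow> bool" where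
  "lie_ideal sg br I \<longleftrightarrow> module.subspace sg I \<and> (\<forall>x. \<forall>i\<in>I. br x i \<in> I)"

definition lie_module :: "('k::field \<Rightarrow> 'g::ab_group_add \<Rightarrow> 'g) \<Rightarrow> ('g \<Rightarrow> 'g \<Rightarrow> 'g)
    \<Rightarrow> ('k \<Rightarrow> 'v::ab_group_add \<Rightarrow> 'v) \<Rightarrow> ('g \<Rightarrow> 'v \<Rightarrow> 'v) \<Rightarrow> bool" where
  "lie_module sg br sV act \<longleftrightarrow> vector_space sV
     \<and> (\<forall>x. Vector_Spaces.linear sV sV (act x))
     \<and> (\<forall>x y v. act (x + y) v = act x v + act y v)
     \<and> (\<forall>c x v. act (sg c x) v = sV c (act x v))
     \<and> (\<forall>x y v. act (br x y) v = act x (act y v) - act y (act x v))"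

definition lie_module_hom :: "('k::field \<Rightarrow> 'v::ab_group_add \<Rightarrow> 'v) \<Rightarrow> ('g \<Rightarrow> 'v \<Rightarrow> 'v)
    \<Rightarrow> ('k \<Rightarrow> 'v2::ab_group_add \<Rightarrow> 'v2) \<Rightarrow> ('g \<Rightarrow> 'v2 \<Rightarrow> 'v2) \<Rightarrow> ('v \<Rightarrow> 'v2) \<Rightarrow> bool" where
  "lie_module_hom sV act sV2 act2 g \<longleftrightarrow> Vector_Spaces.linear sV sV2 g
     \<and> (\<forall>x v. g (act x v) = act2 x (g v))"

definition acts_densely :: "'g set \<Rightarrow> ('g \<Rightarrow> 'w \<Rightarrow> 'w) \<Rightarrow> bool" where
  "acts_densely I act \<longleftrightarrow>
     (\<forall>F h. finite F \<longrightarrow> (\<exists>h'\<in>I. \<forall>w\<in>F. act h' w = act h w))"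

definition irreducible_under :: "('k::field \<Rightarrow> 'w::ab_group_add \<Rightarrow> 'w) \<Rightarrow> 'g set \<Rightarrow> ('g \<Rightarrow> 'w \<Rightarrow> 'w) \<Rightarrow> bool" where
  "irreducible_under sW I act \<longleftrightarrow> (\<exists>w::'w. w \<noteq> 0)
     \<and> (\<forall>S. module.subspace sW S \<and> (\<forall>i\<in>I. \<forall>w\<in>S. act i w \<in> S) \<longrightarrow> S = {0} \<or> S = UNIV)"

definition endo_scalar :: "('k::field \<Rightarrow> 'w::ab_group_add \<Rightarrow> 'w) \<Rightarrow> 'g set \<Rightarrow> ('g \<Rightarrow> 'w \<Rightarrow> 'w) \<Rightarrow> bool" where
  "endo_scalar sW I act \<longleftrightarrow>
     (\<forall>f. Vector_Spaces.linear sW sW f \<and> (\<forall>i\<in>I. \<forall>w. f (act i w) = act i (f w))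
          \<longrightarrow> (\<exists>c. \<forall>w. f w = sW c w))"

section \<open>Tensor product U \<otimes> W as quotient of the free vector space on U \<times> W\<close>

definition fscale :: "'k::field \<Rightarrow> ('a \<Rightarrow> 'k) \<Rightarrow> ('a \<Rightarrow> 'k)" where
  "fscale c f = (\<lambda>p. c * f p)"

definition delta :: "'a \<Rightarrow> 'a \<Rightarrow> 'k::field" where
  "delta p = (\<lambda>q. if q = p then 1 else 0)"

definition free_space :: "('a \<Rightarrow> 'k::field) set" where
  "free_space = {f. finite {p. f p \<noteq> 0}}"

definition tensor_rels :: "('k::field \<Rightarrow> 'u::ab_group_add \<Rightarrow> 'u) \<Rightarrow> ('k \<Rightarrow> 'w::ab_group_add \<Rightarrow> 'w)
    \<Rightarrow> ('u \<times> 'w \<Rightarrow> 'k) set" where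
  "tensor_rels sU sW =
     {delta (u1 + u2, w) - delta (u1, w) - delta (u2, w) | u1 u2 w. True}
   \<union> {delta (u, w1 + w2) - delta (u, w1) - delta (u, w2) | u w1 w2. True}
   \<union> {delta (sU c u, w) - fscale c (delta (u, w)) | c u w. True}
   \<union> {delta (u, sW c w) - fscale c (delta (u, w)) | c u w. True}"

definition tensor_null :: "('k::field \<Rightarrow> 'u::ab_group_add \<Rightarrow> 'u) \<Rightarrow> ('k \<Rightarrow> 'w::ab_group_add \<Rightarrow> 'w)
    \<Rightarrow> ('u \<times> 'w \<Rightarrow> 'k) set" where
  "tensor_null sU sW = module.span fscale (tensor_rels sU sW)"

definition tensor_cls :: "('k::field \<Rightarrow> 'u::ab_group_add \<Rightarrow> 'u) \<Rightarrow> ('k \<Rightarrow> 'w::ab_group_add \<Rightarrow> 'w)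
    \<Rightarrow> ('u \<times> 'w \<Rightarrow> 'k) \<Rightarrow> ('u \<times> 'w \<Rightarrow> 'k) set" where
  "tensor_cls sU sW f = {g \<in> free_space. g - f \<in> tensor_null sU sW}"

definition tensor_space :: "('k::field \<Rightarrow> 'u::ab_group_add \<Rightarrow> 'u) \<Rightarrow> ('k \<Rightarrow> 'w::ab_group_add \<Rightarrow> 'w)
    \<Rightarrow> ('u \<times> 'w \<Rightarrow> 'k) set set" where
  "tensor_space sU sW = tensor_cls sU sW ` free_space"

definition tensor_rep :: "'a set \<Rightarrow> 'a" where
  "tensor_rep X = (SOME f. f \<in> X)"

definition lin_ext :: "('a \<Rightarrow> 'b \<Rightarrow> 'k::field) \<Rightarrow> ('a \<Rightarrow> 'k) \<Rightarrow> ('b \<Rightarrow> 'k)" where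
  "lin_ext F f = (\<lambda>p. \<Sum>q\<in>{q. f q \<noteq> 0}. f q * F q p)"

definition tensor_add :: "('k::field \<Rightarrow> 'u::ab_group_add \<Rightarrow> 'u) \<Rightarrow> ('k \<Rightarrow> 'w::ab_group_add \<Rightarrow> 'w)
    \<Rightarrow> ('u \<times> 'w \<Rightarrow> 'k) set \<Rightarrow> ('u \<times> 'w \<Rightarrow> 'k) set \<Rightarrow> ('u \<times> 'w \<Rightarrow> 'k) set" where
  "tensor_add sU sW X Y = tensor_cls sU sW (tensor_rep X + tensor_rep Y)"

definition tensor_scale :: "('k::field \<Rightarrow> 'u::ab_group_add \<Rightarrow> 'u) \<Rightarrow> ('k \<Rightarrow> 'w::ab_group_add \<Rightarrow> 'w)
    \<Rightarrow> 'k \<Rightarrow> ('u \<times> 'w \<Rightarrow> 'k) set \<Rightarrow> ('u \<times> 'w \<Rightarrow> 'k) set" where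
  "tensor_scale sU sW c X = tensor_cls sU sW (fscale c (tensor_rep X))"

definition tensor_act :: "('k::field \<Rightarrow> 'u::ab_group_add \<Rightarrow> 'u) \<Rightarrow> ('k \<Rightarrow> 'w::ab_group_add \<Rightarrow> 'w)
    \<Rightarrow> ('g \<Rightarrow> 'u \<Rightarrow> 'u) \<Rightarrow> ('g \<Rightarrow> 'w \<Rightarrow> 'w) \<Rightarrow> 'g \<Rightarrow> ('u \<times> 'w \<Rightarrow> 'k) set \<Rightarrow> ('u \<times> 'w \<Rightarrow> 'k) set" where
  "tensor_act sU sW aU aW h X =
     tensor_cls sU sW (lin_ext (\<lambda>(u, w). delta (aU h u, w) + delta (u, aW h w)) (tensor_rep X))"

definition tensor_map_left :: "('k::field \<Rightarrow> 'u2::ab_group_add \<Rightarrow> 'u2) \<Rightarrow> ('k \<Rightarrow> 'w::ab_group_add \<Rightarrow> 'w)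
    \<Rightarrow> ('u \<Rightarrow> 'u2) \<Rightarrow> ('u \<times> 'w \<Rightarrow> 'k) set \<Rightarrow> ('u2 \<times> 'w \<Rightarrow> 'k) set" where
  "tensor_map_left sU2 sW g X =
     tensor_cls sU2 sW (lin_ext (\<lambda>(u, w). delta (g u, w)) (tensor_rep X))"

definition tensor_module_hom :: "('k::field \<Rightarrow> 'u::ab_group_add \<Rightarrow> 'u) \<Rightarrow> ('g \<Rightarrow> 'u \<Rightarrow> 'u)
    \<Rightarrow> ('k \<Rightarrow> 'u2::ab_group_add \<Rightarrow> 'u2) \<Rightarrow> ('g \<Rightarrow> 'u2 \<Rightarrow> 'u2)
    \<Rightarrow> ('k \<Rightarrow> 'w::ab_group_add \<Rightarrow> 'w) \<Rightarrow> ('g \<Rightarrow> 'w \<Rightarrow> 'w)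
    \<Rightarrow> (('u \<times> 'w \<Rightarrow> 'k) set \<Rightarrow> ('u2 \<times> 'w \<Rightarrow> 'k) set) \<Rightarrow> bool" where
  "tensor_module_hom sU aU sU2 aU2 sW aW \<phi> \<longleftrightarrow>
     (\<forall>X\<in>tensor_space sU sW. \<phi> X \<in> tensor_space sU2 sW)
   \<and> (\<forall>X\<in>tensor_space sU sW. \<forall>Y\<in>tensor_space sU sW.
        \<phi> (tensor_add sU sW X Y) = tensor_add sU2 sW (\<phi> X) (\<phi> Y))
   \<and> (\<forall>c. \<forall>X\<in>tensor_space sU sW. \<phi> (tensor_scale sU sW c X) = tensor_scale sU2 sW c (\<phi> X))
   \<and> (\<forall>h. \<forall>X\<in>tensor_space sU sW.
        \<phi> (tensor_act sU sW aU aW h X) = tensor_act sU2 sW aU2 aW h (\<phi> X))"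

end

theory Submission
  imports Defs
begin

text \<open>Since \<open>I\<close> annihilates \<open>U\<close> and \<open>U'\<close>, it acts on \<open>U \<otimes> W\<close> and \<open>U' \<otimes> W\<close> through \<open>W\<close> alone.
  Fix a basis \<open>B\<close> of \<open>U'\<close> and let \<open>P\<^sub>b : U' \<otimes> W \<rightarrow> W\<close> send \<open>v \<otimes> w\<close> to \<open>v\<^sub>b w\<close>, where \<open>v\<^sub>b\<close> is the
  \<open>b\<close>-th coordinate of \<open>v\<close>; together these maps separate the points of \<open>U' \<otimes> W\<close>. For fixed
  \<open>u\<close> and \<open>b\<close>, the map \<open>w \<mapsto> P\<^sub>b (\<phi> (u \<otimes> w))\<close> is an \<open>I\<close>-equivariant endomorphism of \<open>W\<close>,
  hence a scalar \<open>c\<^sub>u(b)\<close>. Only finitely many \<open>c\<^sub>u(b)\<close> are nonzero, as they are detected by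
  \<open>\<phi> (u \<otimes> w\<^sub>0)\<close> for one \<open>w\<^sub>0 \<noteq> 0\<close>, so \<open>g u = \<Sum>\<^sub>b c\<^sub>u(b) b\<close> satisfies
  \<open>\<phi> (u \<otimes> w) = g u \<otimes> w\<close>. Cancelling \<open>w\<^sub>0\<close> shows that \<open>g\<close> is a module homomorphism and that it
  is unique, and \<open>\<phi> = g \<otimes> id\<close> because pure tensors span.\<close>

section \<open>Finitely supported functions and linear extension\<close>

lemma sum_fun_apply: "sum h S p = (\<Sum>q\<in>S. h q p)"
  by (induction S rule: infinite_finite_induct) auto

lemma vector_space_fscale: "vector_space (fscale :: 'k::field \<Rightarrow> ('a \<Rightarrow> 'k) \<Rightarrow> _)"
  by unfold_locales (auto simp: fscale_def fun_eq_iff algebra_simps)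

interpretation FS: vector_space "fscale :: 'k::field \<Rightarrow> ('a \<Rightarrow> 'k) \<Rightarrow> _"
  by (rule vector_space_fscale)

lemma fscale_apply [simp]: "fscale c f p = c * f p"
  by (simp add: fscale_def)

lemma subspace_free_space: "FS.subspace (free_space :: ('a \<Rightarrow> 'k::field) set)"
  unfolding FS.subspace_def
proof (intro conjI ballI allI)
  show "x + y \<in> free_space" if "x \<in> free_space" "y \<in> free_space" for x y :: "'a \<Rightarrow> 'k"
  proof -
    have "{p. (x + y) p \<noteq> 0} \<subseteq> {p. x p \<noteq> 0} \<union> {p. y p \<noteq> 0}" by auto
    then show ?thesis using that unfolding free_space_def by (auto intro: finite_subset)
  qed
  show "fscale c x \<in> free_space" if "x \<in> free_space" for c and x :: "'a \<Rightarrow> 'k"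
    using that unfolding free_space_def by (auto elim!: finite_subset[rotated])
qed (simp add: free_space_def)

lemma free_space_zero [simp]: "0 \<in> free_space"
  and free_space_add: "f \<in> free_space \<Longrightarrow> g \<in> free_space \<Longrightarrow> f + g \<in> free_space"
  and free_space_diff: "f \<in> free_space \<Longrightarrow> g \<in> free_space \<Longrightarrow> f - g \<in> free_space"
  and free_space_scale: "f \<in> free_space \<Longrightarrow> fscale c f \<in> free_space"
  and free_space_sum: "(\<And>i. i \<in> S \<Longrightarrow> h i \<in> free_space) \<Longrightarrow> sum h S \<in> free_space"
  using subspace_free_space
  by (auto intro: FS.subspace_0 FS.subspace_add FS.subspace_diff FS.subspace_scale FS.subspace_sum)

lemma delta_support: "{q. (delta p q :: 'k::field) \<noteq> 0} = {p}"
  by (auto simp: delta_def)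

lemma delta_in_free_space [simp]: "delta p \<in> free_space"
  by (simp add: free_space_def delta_support)

lemma finite_free_support: "f \<in> free_space \<Longrightarrow> finite {q. f q \<noteq> 0}"
  by (simp add: free_space_def)

definition free_ext :: "('k::field \<Rightarrow> 'v::ab_group_add \<Rightarrow> 'v) \<Rightarrow> ('a \<Rightarrow> 'v) \<Rightarrow> ('a \<Rightarrow> 'k) \<Rightarrow> 'v" where
  "free_ext s G f = (\<Sum>q\<in>{q. f q \<noteq> 0}. s (f q) (G q))"

lemma lin_ext_eq_free_ext: "lin_ext G f = free_ext fscale G f"
  by (simp add: lin_ext_def free_ext_def fun_eq_iff sum_fun_apply)

lemma free_ext_delta_eq [simp]: "free_ext fscale delta f = f" if "f \<in> free_space"
  using finite_free_support[OF that]
  by (auto simp: free_ext_def fun_eq_iff sum_fun_apply delta_def if_distrib cong: if_cong)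

lemma free_ext_in_free_space: "(\<And>q. G q \<in> free_space) \<Longrightarrow> free_ext fscale G f \<in> free_space"
  unfolding free_ext_def by (intro free_space_sum free_space_scale)

lemma lin_ext_delta [simp]: "lin_ext G (delta p) = G p"
  by (simp add: lin_ext_def delta_support delta_def)

lemma linear_free_ext:
  assumes "Vector_Spaces.linear s s' h"
  shows "free_ext s' (\<lambda>q. h (G q)) f = h (free_ext s G f)"
proof -
  interpret Vector_Spaces.linear s s' h by (rule assms)
  show ?thesis by (simp add: free_ext_def sum scale)
qed

lemma free_ext_nonzero: "free_ext s G f \<noteq> 0 \<Longrightarrow> \<exists>q. f q \<noteq> 0 \<and> s (f q) (G q) \<noteq> 0"
  unfolding free_ext_def by (metis (mono_tags, lifting) mem_Collect_eq sum.neutral)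

context vector_space
begin

lemma free_ext_superset:
  "finite S \<Longrightarrow> {q. f q \<noteq> 0} \<subseteq> S \<Longrightarrow> free_ext scale G f = (\<Sum>q\<in>S. scale (f q) (G q))"
  unfolding free_ext_def by (rule sum.mono_neutral_left) auto

lemma free_ext_delta [simp]: "free_ext scale G (delta p) = G p"
  by (simp add: free_ext_def delta_support delta_def)

lemma free_ext_add:
  assumes "f \<in> free_space" "g \<in> free_space"
  shows "free_ext scale G (f + g) = free_ext scale G f + free_ext scale G g"
proof -
  let ?S = "{q. f q \<noteq> 0} \<union> {q. g q \<noteq> 0}"
  have fin: "finite ?S" using assms by (simp add: free_space_def)
  have "free_ext scale G (f + g) = (\<Sum>q\<in>?S. scale ((f + g) q) (G q))"
    by (rule free_ext_superset[OF fin]) auto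
  also have "\<dots> = (\<Sum>q\<in>?S. scale (f q) (G q)) + (\<Sum>q\<in>?S. scale (g q) (G q))"
    by (simp add: scale_left_distrib sum.distrib)
  also have "\<dots> = free_ext scale G f + free_ext scale G g"
    by (simp add: free_ext_superset[OF fin])
  finally show ?thesis .
qed

lemma free_ext_scale:
  assumes "f \<in> free_space"
  shows "free_ext scale G (fscale c f) = scale c (free_ext scale G f)"
proof -
  have fin: "finite {q. f q \<noteq> 0}" using assms by (simp add: free_space_def)
  have "free_ext scale G (fscale c f) = (\<Sum>q\<in>{q. f q \<noteq> 0}. scale (c * f q) (G q))"
    by (subst free_ext_superset[OF fin]) auto
  then show ?thesis by (simp add: free_ext_def scale_sum_right)
qed

lemma free_ext_diff:
  assumes "f \<in> free_space" "g \<in> free_space"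
  shows "free_ext scale G (f - g) = free_ext scale G f - free_ext scale G g"
proof -
  have "fscale (-1) g = - g" by (simp add: fun_eq_iff)
  then show ?thesis
    using free_ext_add[OF assms(1) free_space_scale[OF assms(2)], of G "-1"]
      free_ext_scale[OF assms(2), of G "-1"] by simp
qed

lemma free_ext_sum:
  "(\<And>i. i \<in> S \<Longrightarrow> h i \<in> free_space) \<Longrightarrow> free_ext scale G (sum h S) = (\<Sum>i\<in>S. free_ext scale G (h i))"
proof (induction S rule: infinite_finite_induct)
  case (insert x F)
  have "free_ext scale G (h x + sum h F) = free_ext scale G (h x) + free_ext scale G (sum h F)"
    using insert.prems by (intro free_ext_add free_space_sum) auto
  with insert show ?case by (simp only: sum.insert[OF insert(1,2)]) auto
qed (auto simp: free_ext_def)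

lemma free_ext_span:
  assumes Z: "subspace Z" and R: "R \<subseteq> free_space"
    and RZ: "\<And>r. r \<in> R \<Longrightarrow> free_ext scale G r \<in> Z" and x: "x \<in> FS.span R"
  shows "free_ext scale G x \<in> Z"
proof -
  have "x \<in> free_space \<and> free_ext scale G x \<in> Z"
    using x
  proof (induction rule: FS.span_induct_alt)
    case base
    show ?case by (intro conjI free_space_zero) (simp add: free_ext_def subspace_0[OF Z])
  next
    case (step c r y)
    then have r: "r \<in> free_space" and cr: "fscale c r \<in> free_space"
      using R by (auto intro: free_space_scale)
    have "free_ext scale G (fscale c r + y) = scale c (free_ext scale G r) + free_ext scale G y"
      using step r cr by (simp only: free_ext_add free_ext_scale)
    then show ?case
      using step cr RZ by (metis free_space_add subspace_add[OF Z] subspace_scale[OF Z])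
  qed
  then show ?thesis ..
qed

lemma free_ext_free_ext:
  assumes "f \<in> free_space" and "\<And>q. H q \<in> free_space"
  shows "free_ext scale G (free_ext fscale H f) = free_ext scale (\<lambda>q. free_ext scale G (H q)) f"
  using assms unfolding free_ext_def[of fscale]
  by (simp add: free_ext_sum free_space_scale free_ext_scale free_ext_def[of scale "\<lambda>q. free_ext scale G (H q)"])

end

section \<open>The tensor congruence\<close>

lemma tensor_rels_subset_free_space: "tensor_rels sU sW \<subseteq> free_space"
  unfolding tensor_rels_def by (auto intro!: free_space_diff free_space_scale)

lemma subspace_tensor_null: "FS.subspace (tensor_null sU sW)"
  unfolding tensor_null_def by (rule FS.subspace_span)

lemmas tensor_null_zero = FS.subspace_0[OF subspace_tensor_null]
  and tensor_null_add = FS.subspace_add[OF subspace_tensor_null]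
  and tensor_null_diff = FS.subspace_diff[OF subspace_tensor_null]
  and tensor_null_neg = FS.subspace_neg[OF subspace_tensor_null]
  and tensor_null_scale = FS.subspace_scale[OF subspace_tensor_null]
  and tensor_null_sum = FS.subspace_sum[OF subspace_tensor_null]

lemma tensor_null_add_left: "delta (u1 + u2, w) - delta (u1, w) - delta (u2, w) \<in> tensor_null sU sW"
  and tensor_null_add_right: "delta (u, w1 + w2) - delta (u, w1) - delta (u, w2) \<in> tensor_null sU sW"
  and tensor_null_scale_left: "delta (sU c u, w) - fscale c (delta (u, w)) \<in> tensor_null sU sW"
  and tensor_null_scale_right: "delta (u, sW c w) - fscale c (delta (u, w)) \<in> tensor_null sU sW"
  unfolding tensor_null_def tensor_rels_def by (rule FS.span_base, blast)+

lemma tensor_null_delta_zero_left: "delta (0, w) \<in> tensor_null sU sW"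
  and tensor_null_delta_zero_right: "delta (u, 0) \<in> tensor_null sU sW"
  using tensor_null_neg[OF tensor_null_add_left[of 0 0 w]] tensor_null_neg[OF tensor_null_add_right[of u 0 0]]
  by simp_all

lemma tensor_null_delta_sum_left:
  "delta (sum x S, w) - (\<Sum>i\<in>S. delta (x i, w)) \<in> tensor_null sU sW"
proof (induction S rule: infinite_finite_induct)
  case (insert a F)
  have "delta (x a + sum x F, w) - (delta (x a, w) + (\<Sum>i\<in>F. delta (x i, w)))
      = (delta (x a + sum x F, w) - delta (x a, w) - delta (sum x F, w))
        + (delta (sum x F, w) - (\<Sum>i\<in>F. delta (x i, w)))"
    by (simp add: algebra_simps)
  then show ?case
    unfolding sum.insert[OF insert(1,2)] by (metis tensor_null_add tensor_null_add_left insert.IH)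
qed (simp_all add: tensor_null_delta_zero_left)

lemma tensor_null_delta_sum_right:
  "delta (u, sum x S) - (\<Sum>i\<in>S. delta (u, x i)) \<in> tensor_null sU sW"
proof (induction S rule: infinite_finite_induct)
  case (insert a F)
  have "delta (u, x a + sum x F) - (delta (u, x a) + (\<Sum>i\<in>F. delta (u, x i)))
      = (delta (u, x a + sum x F) - delta (u, x a) - delta (u, sum x F))
        + (delta (u, sum x F) - (\<Sum>i\<in>F. delta (u, x i)))"
    by (simp add: algebra_simps)
  then show ?case
    unfolding sum.insert[OF insert(1,2)] by (metis tensor_null_add tensor_null_add_right insert.IH)
qed (simp_all add: tensor_null_delta_zero_right)

lemma tensor_cls_eq: "f - g \<in> tensor_null sU sW \<Longrightarrow> tensor_cls sU sW f = tensor_cls sU sW g"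
  unfolding tensor_cls_def
  by (metis (no_types, opaque_lifting) diff_add_cancel diff_diff_eq2 tensor_null_add tensor_null_diff)

lemma tensor_cls_self: "f \<in> free_space \<Longrightarrow> f \<in> tensor_cls sU sW f"
  by (simp add: tensor_cls_def tensor_null_zero)

lemma tensor_cls_in_space: "f \<in> free_space \<Longrightarrow> tensor_cls sU sW f \<in> tensor_space sU sW"
  by (simp add: tensor_space_def)

lemma tensor_rep_cls:
  assumes "f \<in> free_space"
  shows "tensor_rep (tensor_cls sU sW f) \<in> free_space"
    and "tensor_rep (tensor_cls sU sW f) - f \<in> tensor_null sU sW"
proof -
  have "tensor_rep (tensor_cls sU sW f) \<in> tensor_cls sU sW f"
    unfolding tensor_rep_def by (rule someI[of _ f]) (rule tensor_cls_self[OF assms])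
  then show "tensor_rep (tensor_cls sU sW f) \<in> free_space"
    and "tensor_rep (tensor_cls sU sW f) - f \<in> tensor_null sU sW"
    by (simp_all add: tensor_cls_def)
qed

lemma tensor_space_rep:
  assumes "X \<in> tensor_space sU sW"
  shows "tensor_rep X \<in> free_space" and "tensor_cls sU sW (tensor_rep X) = X"
  using assms tensor_rep_cls tensor_cls_eq unfolding tensor_space_def by blast+

definition bilinear_modulo :: "('k::field \<Rightarrow> 'u::ab_group_add \<Rightarrow> 'u) \<Rightarrow> ('k \<Rightarrow> 'w::ab_group_add \<Rightarrow> 'w)
    \<Rightarrow> ('k \<Rightarrow> 'v::ab_group_add \<Rightarrow> 'v) \<Rightarrow> 'v set \<Rightarrow> ('u \<times> 'w \<Rightarrow> 'v) \<Rightarrow> bool" where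
  "bilinear_modulo sU sW s Z G \<longleftrightarrow>
     (\<forall>u1 u2 w. G (u1 + u2, w) - G (u1, w) - G (u2, w) \<in> Z)
   \<and> (\<forall>u w1 w2. G (u, w1 + w2) - G (u, w1) - G (u, w2) \<in> Z)
   \<and> (\<forall>c u w. G (sU c u, w) - s c (G (u, w)) \<in> Z)
   \<and> (\<forall>c u w. G (u, sW c w) - s c (G (u, w)) \<in> Z)"

context vector_space
begin

lemma free_ext_tensor_null:
  assumes "subspace Z" and "bilinear_modulo sU sW scale Z G" and "x \<in> tensor_null sU sW"
  shows "free_ext scale G x \<in> Z"
proof (rule free_ext_span[OF assms(1) tensor_rels_subset_free_space])
  show "x \<in> FS.span (tensor_rels sU sW)" using assms(3) by (simp add: tensor_null_def)
next
  fix r assume "r \<in> tensor_rels sU sW"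
  then show "free_ext scale G r \<in> Z"
    using assms(2) unfolding tensor_rels_def bilinear_modulo_def
    by (auto simp: free_ext_diff free_ext_scale free_space_diff free_space_scale)
qed

lemma bilinear_modulo_add:
  assumes Z: "subspace Z" and "bilinear_modulo sU sW scale Z G1" "bilinear_modulo sU sW scale Z G2"
  shows "bilinear_modulo sU sW scale Z (\<lambda>q. G1 q + G2 q)"
proof -
  have "(a + b) - (c + d) - (e + f) = (a - c - e) + (b - d - f)" for a b c d e f :: 'b
    by (simp add: algebra_simps)
  moreover have "(a + b) - scale k (c + d) = (a - scale k c) + (b - scale k d)" for a b c d k
    by (simp add: scale_right_distrib algebra_simps)
  ultimately show ?thesis
    using assms unfolding bilinear_modulo_def by (simp only:) (metis subspace_add[OF Z])
qed

end

lemma bilinear_modulo_delta: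
  assumes "Vector_Spaces.linear sU sU' a" and "Vector_Spaces.linear sW sW' b"
  shows "bilinear_modulo sU sW fscale (tensor_null sU' sW') (\<lambda>(u, w). delta (a u, b w))"
proof -
  interpret A: Vector_Spaces.linear sU sU' a by (rule assms(1))
  interpret B: Vector_Spaces.linear sW sW' b by (rule assms(2))
  show ?thesis
    unfolding bilinear_modulo_def
    by (simp add: A.add A.scale B.add B.scale tensor_null_add_left tensor_null_add_right
        tensor_null_scale_left tensor_null_scale_right)
qed

lemma tensor_cls_lin_ext_rep:
  assumes "bilinear_modulo sU sW fscale (tensor_null sU' sW') G" and f: "f \<in> free_space"
  shows "tensor_cls sU' sW' (lin_ext G (tensor_rep (tensor_cls sU sW f))) = tensor_cls sU' sW' (lin_ext G f)"
proof -
  let ?r = "tensor_rep (tensor_cls sU sW f)"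
  have "free_ext fscale G (?r - f) \<in> tensor_null sU' sW'"
    by (rule FS.free_ext_tensor_null[OF subspace_tensor_null assms(1) tensor_rep_cls(2)[OF f]])
  then show ?thesis
    unfolding lin_ext_eq_free_ext
    by (intro tensor_cls_eq) (simp add: FS.free_ext_diff tensor_rep_cls(1) f)
qed

abbreviation pure_tensor :: "('k::field \<Rightarrow> 'u::ab_group_add \<Rightarrow> 'u) \<Rightarrow> ('k \<Rightarrow> 'w::ab_group_add \<Rightarrow> 'w)
    \<Rightarrow> 'u \<Rightarrow> 'w \<Rightarrow> ('u \<times> 'w \<Rightarrow> 'k) set" where
  "pure_tensor sU sW u w \<equiv> tensor_cls sU sW (delta (u, w))"

lemma tensor_add_cls:
  "f \<in> free_space \<Longrightarrow> g \<in> free_space \<Longrightarrow>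
    tensor_add sU sW (tensor_cls sU sW f) (tensor_cls sU sW g) = tensor_cls sU sW (f + g)"
  unfolding tensor_add_def
  by (rule tensor_cls_eq) (metis (no_types, lifting) add_diff_add tensor_null_add tensor_rep_cls(2))

lemma tensor_scale_cls:
  assumes "f \<in> free_space"
  shows "tensor_scale sU sW c (tensor_cls sU sW f) = tensor_cls sU sW (fscale c f)"
  unfolding tensor_scale_def
  by (rule tensor_cls_eq)
    (metis FS.scale_right_diff_distrib tensor_null_scale tensor_rep_cls(2)[OF assms])

lemma tensor_act_cls:
  assumes "vector_space sU" "vector_space sW"
    and "Vector_Spaces.linear sU sU (aU h)" "Vector_Spaces.linear sW sW (aW h)"
    and f: "f \<in> free_space"
  shows "tensor_act sU sW aU aW h (tensor_cls sU sW f)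
       = tensor_cls sU sW (lin_ext (\<lambda>(u, w). delta (aU h u, w) + delta (u, aW h w)) f)"
proof -
  interpret U: vector_space sU by fact
  interpret W: vector_space sW by fact
  have "bilinear_modulo sU sW fscale (tensor_null sU sW) (\<lambda>(u, w). delta (aU h u, w))"
    and "bilinear_modulo sU sW fscale (tensor_null sU sW) (\<lambda>(u, w). delta (u, aW h w))"
    using bilinear_modulo_delta[OF assms(3) W.linear_id] bilinear_modulo_delta[OF U.linear_id assms(4)]
    by simp_all
  from FS.bilinear_modulo_add[OF subspace_tensor_null this]
  have "bilinear_modulo sU sW fscale (tensor_null sU sW) (\<lambda>(u, w). delta (aU h u, w) + delta (u, aW h w))"
    by (simp add: case_prod_beta')
  then show ?thesis
    unfolding tensor_act_def by (rule tensor_cls_lin_ext_rep[OF _ f])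
qed

lemma tensor_map_left_cls:
  assumes "vector_space sW" "Vector_Spaces.linear sU sU2 g" and f: "f \<in> free_space"
  shows "tensor_map_left sU2 sW g (tensor_cls sU sW f) = tensor_cls sU2 sW (lin_ext (\<lambda>(u, w). delta (g u, w)) f)"
proof -
  interpret W: vector_space sW by fact
  show ?thesis
    using bilinear_modulo_delta[OF assms(2) W.linear_id]
    unfolding tensor_map_left_def by (intro tensor_cls_lin_ext_rep[OF _ f]) simp
qed

lemma pure_tensor_in_space: "pure_tensor sU sW u w \<in> tensor_space sU sW"
  by (simp add: tensor_cls_in_space)

lemma pure_tensor_add_left:
  "tensor_add sU sW (pure_tensor sU sW u1 w) (pure_tensor sU sW u2 w) = pure_tensor sU sW (u1 + u2) w"
  by (simp add: tensor_add_cls) (metis diff_diff_eq tensor_cls_eq tensor_null_add_left tensor_null_neg minus_diff_eq)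

lemma pure_tensor_add_right:
  "tensor_add sU sW (pure_tensor sU sW u w1) (pure_tensor sU sW u w2) = pure_tensor sU sW u (w1 + w2)"
  by (simp add: tensor_add_cls) (metis diff_diff_eq tensor_cls_eq tensor_null_add_right tensor_null_neg minus_diff_eq)

lemma pure_tensor_scale_left:
  "tensor_scale sU sW c (pure_tensor sU sW u w) = pure_tensor sU sW (sU c u) w"
  by (simp add: tensor_scale_cls) (metis tensor_cls_eq tensor_null_scale_left tensor_null_neg minus_diff_eq)

lemma pure_tensor_scale_right:
  "tensor_scale sU sW c (pure_tensor sU sW u w) = pure_tensor sU sW u (sW c w)"
  by (simp add: tensor_scale_cls) (metis tensor_cls_eq tensor_null_scale_right tensor_null_neg minus_diff_eq)

lemma tensor_act_pure:
  assumes "vector_space sU" "vector_space sW"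
    and "Vector_Spaces.linear sU sU (aU h)" "Vector_Spaces.linear sW sW (aW h)"
  shows "tensor_act sU sW aU aW h (pure_tensor sU sW u w)
       = tensor_add sU sW (pure_tensor sU sW (aU h u) w) (pure_tensor sU sW u (aW h w))"
  unfolding tensor_act_cls[where aU=aU and aW=aW and h=h, OF assms delta_in_free_space]
    lin_ext_delta prod.case
  by (rule tensor_add_cls[symmetric]) simp_all

lemma tensor_act_pure_annihilated:
  assumes "vector_space sU" "vector_space sW"
    and "Vector_Spaces.linear sU sU (aU h)" "Vector_Spaces.linear sW sW (aW h)"
    and "aU h u = 0"
  shows "tensor_act sU sW aU aW h (pure_tensor sU sW u w) = pure_tensor sU sW u (aW h w)"
  unfolding tensor_act_cls[where aU=aU and aW=aW and h=h, OF assms(1-4) delta_in_free_space]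
    lin_ext_delta prod.case assms(5)
  by (rule tensor_cls_eq) (simp only: add_diff_cancel tensor_null_delta_zero_left)

lemma tensor_map_left_pure:
  assumes "vector_space sW" "Vector_Spaces.linear sU sU2 g"
  shows "tensor_map_left sU2 sW g (pure_tensor sU sW u w) = pure_tensor sU2 sW (g u) w"
  by (simp add: tensor_map_left_cls[OF assms])

lemma tensor_space_induct [consumes 1, case_names pure add scale]:
  assumes X: "X \<in> tensor_space sU sW"
    and pure: "\<And>u w. P (pure_tensor sU sW u w)"
    and add: "\<And>X Y. X \<in> tensor_space sU sW \<Longrightarrow> Y \<in> tensor_space sU sW \<Longrightarrow> P X \<Longrightarrow> P Y
                \<Longrightarrow> P (tensor_add sU sW X Y)"
    and scale: "\<And>c X. X \<in> tensor_space sU sW \<Longrightarrow> P X \<Longrightarrow> P (tensor_scale sU sW c X)"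
  shows "P X"
proof -
  have scaled_pure: "P (tensor_cls sU sW (fscale c (delta q)))" for c q
    using scale[OF pure_tensor_in_space pure] by (cases q) (simp add: tensor_scale_cls)
  have "P (tensor_cls sU sW (\<Sum>q\<in>S. fscale (k q) (delta q)))" if "finite S" for S k
    using that
  proof (induction S rule: finite_induct)
    case empty
    show ?case using scaled_pure[of 0] by (simp only: FS.scale_zero_left sum.empty)
  next
    case (insert q S)
    have S_free: "(\<Sum>q\<in>S. fscale (k q) (delta q)) \<in> free_space"
      by (intro free_space_sum free_space_scale delta_in_free_space)
    have "tensor_cls sU sW (\<Sum>q\<in>insert q S. fscale (k q) (delta q))
        = tensor_add sU sW (tensor_cls sU sW (fscale (k q) (delta q))) (tensor_cls sU sW (\<Sum>q\<in>S. fscale (k q) (delta q)))"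
      unfolding sum.insert[OF insert(1,2)]
      by (rule tensor_add_cls[symmetric]) (simp_all only: free_space_scale delta_in_free_space S_free)
    moreover have "P (tensor_add sU sW (tensor_cls sU sW (fscale (k q) (delta q)))
        (tensor_cls sU sW (\<Sum>q\<in>S. fscale (k q) (delta q))))"
      by (intro add tensor_cls_in_space free_space_scale delta_in_free_space S_free scaled_pure insert.IH)
    ultimately show ?case by (simp only:)
  qed
  moreover obtain f where f: "f \<in> free_space" "X = tensor_cls sU sW f"
    using X by (auto simp: tensor_space_def)
  ultimately show ?thesis
    using free_ext_delta_eq[OF f(1)] finite_free_support[OF f(1)] unfolding free_ext_def f(2)
    by metis
qed

lemma tensor_map_left_add:
  assumes "vector_space sW" "Vector_Spaces.linear sU sU2 g"
    and "X \<in> tensor_space sU sW" "Y \<in> tensor_space sU sW"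
  shows "tensor_map_left sU2 sW g (tensor_add sU sW X Y)
       = tensor_add sU2 sW (tensor_map_left sU2 sW g X) (tensor_map_left sU2 sW g Y)"
proof -
  let ?G = "\<lambda>(u, w). delta (g u, w)"
  have G_free: "\<And>q. ?G q \<in> free_space" by (simp add: case_prod_beta)
  obtain f h where f: "f \<in> free_space" "X = tensor_cls sU sW f"
    and h: "h \<in> free_space" "Y = tensor_cls sU sW h"
    using assms(3,4) by (auto simp: tensor_space_def)
  then show ?thesis
    by (simp add: tensor_add_cls tensor_map_left_cls[OF assms(1,2)] free_space_add
        lin_ext_eq_free_ext FS.free_ext_add free_ext_in_free_space[OF G_free])
qed

lemma tensor_map_left_scale:
  assumes "vector_space sW" "Vector_Spaces.linear sU sU2 g" and "X \<in> tensor_space sU sW"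
  shows "tensor_map_left sU2 sW g (tensor_scale sU sW c X) = tensor_scale sU2 sW c (tensor_map_left sU2 sW g X)"
proof -
  let ?G = "\<lambda>(u, w). delta (g u, w)"
  have G_free: "\<And>q. ?G q \<in> free_space" by (simp add: case_prod_beta)
  obtain f where f: "f \<in> free_space" "X = tensor_cls sU sW f"
    using assms(3) by (auto simp: tensor_space_def)
  then show ?thesis
    by (simp add: tensor_scale_cls tensor_map_left_cls[OF assms(1,2)] free_space_scale
        lin_ext_eq_free_ext FS.free_ext_scale free_ext_in_free_space[OF G_free])
qed

section \<open>Coordinates with respect to a basis of the left factor\<close>

lemma tensor_null_trans:
  "a - b \<in> tensor_null sU sW \<Longrightarrow> b - c \<in> tensor_null sU sW \<Longrightarrow> a - c \<in> tensor_null sU sW"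
  using tensor_null_add[of "a - b" sU sW "b - c"] by simp

lemma tensor_null_sum_diff:
  "(\<And>i. i \<in> S \<Longrightarrow> a i - b i \<in> tensor_null sU sW) \<Longrightarrow> sum a S - sum b S \<in> tensor_null sU sW"
  using tensor_null_sum[of S "\<lambda>i. a i - b i" sU sW] by (simp add: sum_subtractf)

locale tensor_coordinates = V: vector_space sV + W: vector_space sW
  for sV :: "'k::field \<Rightarrow> 'v::ab_group_add \<Rightarrow> 'v" and sW :: "'k \<Rightarrow> 'w::ab_group_add \<Rightarrow> 'w" +
  fixes B :: "'v set"
  assumes basis_independent: "\<not> V.dependent B" and basis_spans: "V.span B = UNIV"
begin

lemma representation_add: "V.representation B (u + v) b = V.representation B u b + V.representation B v b"
  using V.representation_add[OF basis_independent] basis_spans by simp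

lemma representation_scale: "V.representation B (sV c v) b = c * V.representation B v b"
  using V.representation_scale[OF basis_independent] basis_spans by simp

lemma representation_expansion:
  assumes "finite S" "{b. V.representation B v b \<noteq> 0} \<subseteq> S"
  shows "(\<Sum>b\<in>S. sV (V.representation B v b) b) = v"
proof -
  have "(\<Sum>b\<in>S. sV (V.representation B v b) b) = (\<Sum>b | V.representation B v b \<noteq> 0. sV (V.representation B v b) b)"
    by (rule sum.mono_neutral_right[OF assms(1,2)]) auto
  also have "\<dots> = v"
    using V.sum_nonzero_representation_eq[OF basis_independent] basis_spans by simp
  finally show ?thesis .
qed

lemma representation_inj:
  assumes "\<And>b. V.representation B u b = V.representation B v b"
  shows "u = v"
proof -
  have "V.representation B u = V.representation B v" using assms by blast
  then show ?thesis
    using V.sum_nonzero_representation_eq[OF basis_independent] basis_spans by (metis UNIV_I)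
qed

definition coordinate :: "'v \<Rightarrow> ('v \<times> 'w \<Rightarrow> 'k) \<Rightarrow> 'w" where
  "coordinate b = free_ext sW (\<lambda>(v, w). sW (V.representation B v b) w)"

lemma coordinate_delta: "coordinate b (delta (v, w)) = sW (V.representation B v b) w"
  by (simp add: coordinate_def)

lemma coordinate_add: "f \<in> free_space \<Longrightarrow> g \<in> free_space \<Longrightarrow> coordinate b (f + g) = coordinate b f + coordinate b g"
  and coordinate_diff: "f \<in> free_space \<Longrightarrow> g \<in> free_space \<Longrightarrow> coordinate b (f - g) = coordinate b f - coordinate b g"
  and coordinate_scale: "f \<in> free_space \<Longrightarrow> coordinate b (fscale c f) = sW c (coordinate b f)"
  by (simp_all add: coordinate_def W.free_ext_add W.free_ext_diff W.free_ext_scale)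

lemma coordinate_tensor_null: "x \<in> tensor_null sV sW \<Longrightarrow> coordinate b x = 0"
proof -
  assume x: "x \<in> tensor_null sV sW"
  have "bilinear_modulo sV sW sW {0} (\<lambda>(v, w). sW (V.representation B v b) w)"
    by (simp add: bilinear_modulo_def representation_add representation_scale
        W.scale_left_distrib W.scale_right_distrib W.scale_left_commute)
  from W.free_ext_tensor_null[OF W.subspace_single_0 this x] show ?thesis
    by (simp add: coordinate_def)
qed

lemma coordinate_cong:
  "f \<in> free_space \<Longrightarrow> g \<in> free_space \<Longrightarrow> f - g \<in> tensor_null sV sW \<Longrightarrow> coordinate b f = coordinate b g"
  using coordinate_tensor_null[of "f - g" b] coordinate_diff[of f g b] by simp

lemma coordinate_nonzero:
  "coordinate b f \<noteq> 0 \<Longrightarrow> \<exists>q. f q \<noteq> 0 \<and> V.representation B (fst q) b \<noteq> 0"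
  unfolding coordinate_def by (drule free_ext_nonzero) (auto split: prod.splits)

lemma coordinate_lin_ext_annihilated:
  assumes t: "Vector_Spaces.linear sW sW t" and f: "f \<in> free_space"
  shows "coordinate b (lin_ext (\<lambda>(v, w). delta (0, w) + delta (v, t w)) f) = t (coordinate b f)"
proof -
  interpret T: Vector_Spaces.linear sW sW t by (rule t)
  have "coordinate b (lin_ext (\<lambda>(v, w). delta (0, w) + delta (v, t w)) f)
      = free_ext sW (\<lambda>q. coordinate b ((\<lambda>(v, w). delta (0, w) + delta (v, t w)) q)) f"
    unfolding lin_ext_eq_free_ext coordinate_def
    by (rule W.free_ext_free_ext[OF f]) (auto split: prod.splits intro: free_space_add)
  also have "\<dots> = free_ext sW (\<lambda>q. t ((\<lambda>(v, w). sW (V.representation B v b) w) q)) f"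
    by (rule arg_cong[where f="\<lambda>G. free_ext sW G f"])
      (auto simp: fun_eq_iff coordinate_add coordinate_delta V.representation_zero T.scale split: prod.splits)
  also have "\<dots> = t (coordinate b f)"
    unfolding coordinate_def by (rule linear_free_ext[OF t])
  finally show ?thesis .
qed

lemma delta_expansion:
  assumes "finite S" "{b. V.representation B v b \<noteq> 0} \<subseteq> S"
  shows "delta (v, w) - (\<Sum>b\<in>S. delta (b, sW (V.representation B v b) w)) \<in> tensor_null sV sW"
proof (rule tensor_null_trans)
  show "delta (v, w) - (\<Sum>b\<in>S. delta (sV (V.representation B v b) b, w)) \<in> tensor_null sV sW"
    using tensor_null_delta_sum_left[of "\<lambda>b. sV (V.representation B v b) b" S w]
    by (simp add: representation_expansion[OF assms])
  show "(\<Sum>b\<in>S. delta (sV (V.representation B v b) b, w))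
      - (\<Sum>b\<in>S. delta (b, sW (V.representation B v b) w)) \<in> tensor_null sV sW"
  proof (rule tensor_null_sum_diff)
    fix b
    let ?r = "V.representation B v b"
    have "(delta (sV ?r b, w) - fscale ?r (delta (b, w))) - (delta (b, sW ?r w) - fscale ?r (delta (b, w)))
        \<in> tensor_null sV sW"
      by (rule tensor_null_diff[OF tensor_null_scale_left tensor_null_scale_right])
    then show "delta (sV ?r b, w) - delta (b, sW ?r w) \<in> tensor_null sV sW" by simp
  qed
qed

text \<open>\<open>V \<otimes> W\<close> is the direct sum of the copies \<open>b \<otimes> W\<close>, \<open>b \<in> B\<close>.\<close>

lemma free_space_expansion:
  assumes f: "f \<in> free_space" and S: "finite S"
    and supp: "\<And>q. f q \<noteq> 0 \<Longrightarrow> {b. V.representation B (fst q) b \<noteq> 0} \<subseteq> S"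
  shows "f - (\<Sum>b\<in>S. delta (b, coordinate b f)) \<in> tensor_null sV sW"
proof -
  let ?Q = "{q. f q \<noteq> 0}"
  define y where "y q b = sW (V.representation B (fst q) b) (sW (f q) (snd q))" for q b
  have "f - (\<Sum>q\<in>?Q. \<Sum>b\<in>S. delta (b, y q b)) \<in> tensor_null sV sW"
  proof -
    have "fscale (f q) (delta q) - (\<Sum>b\<in>S. delta (b, y q b)) \<in> tensor_null sV sW" if "f q \<noteq> 0" for q
    proof (cases q)
      case (Pair v w)
      show ?thesis
      proof (rule tensor_null_trans)
        show "fscale (f q) (delta q) - delta (v, sW (f q) w) \<in> tensor_null sV sW"
          using tensor_null_neg[OF tensor_null_scale_right[where u=v and c="f q" and w=w]] Pair by simp
        show "delta (v, sW (f q) w) - (\<Sum>b\<in>S. delta (b, y q b)) \<in> tensor_null sV sW"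
          using delta_expansion[OF S supp[OF that]] Pair by (simp add: y_def del: W.scale_scale)
      qed
    qed
    then have "(\<Sum>q\<in>?Q. fscale (f q) (delta q)) - (\<Sum>q\<in>?Q. \<Sum>b\<in>S. delta (b, y q b)) \<in> tensor_null sV sW"
      by (intro tensor_null_sum_diff) simp
    then show ?thesis using free_ext_delta_eq[OF f] by (simp add: free_ext_def)
  qed
  moreover have "(\<Sum>q\<in>?Q. \<Sum>b\<in>S. delta (b, y q b)) - (\<Sum>b\<in>S. delta (b, coordinate b f)) \<in> tensor_null sV sW"
  proof -
    have "(\<Sum>q\<in>?Q. y q b) = coordinate b f" for b
      unfolding coordinate_def free_ext_def y_def
      by (rule sum.cong) (auto simp: W.scale_left_commute split: prod.splits)
    then have "(\<Sum>q\<in>?Q. delta (b, y q b)) - delta (b, coordinate b f) \<in> tensor_null sV sW" for b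
      using tensor_null_neg[OF tensor_null_delta_sum_right[of b "\<lambda>q. y q b" ?Q]] by simp
    then show ?thesis by (subst sum.swap) (intro tensor_null_sum_diff)
  qed
  ultimately show ?thesis by (rule tensor_null_trans)
qed

lemma tensor_null_if_coordinates_zero:
  assumes f: "f \<in> free_space" and zero: "\<And>b. coordinate b f = 0"
  shows "f \<in> tensor_null sV sW"
proof -
  let ?S = "\<Union>q\<in>{q. f q \<noteq> 0}. {b. V.representation B (fst q) b \<noteq> 0}"
  have "finite ?S" using finite_free_support[OF f] V.finite_representation by blast
  from free_space_expansion[OF f this] have "f - (\<Sum>b\<in>?S. delta (b, 0)) \<in> tensor_null sV sW"
    by (auto simp: zero)
  moreover have "(\<Sum>b\<in>?S. delta (b, 0)) \<in> tensor_null sV sW"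
    by (intro tensor_null_sum tensor_null_delta_zero_right)
  ultimately show ?thesis using tensor_null_add by fastforce
qed

definition tensor_coord :: "'v \<Rightarrow> ('v \<times> 'w \<Rightarrow> 'k) set \<Rightarrow> 'w" where
  "tensor_coord b X = coordinate b (tensor_rep X)"

lemma tensor_coord_cls: "f \<in> free_space \<Longrightarrow> tensor_coord b (tensor_cls sV sW f) = coordinate b f"
  unfolding tensor_coord_def by (rule coordinate_cong) (auto intro: tensor_rep_cls)

lemma tensor_coord_pure: "tensor_coord b (pure_tensor sV sW v w) = sW (V.representation B v b) w"
  by (simp add: tensor_coord_cls coordinate_delta)

lemma tensor_coord_add:
  "X \<in> tensor_space sV sW \<Longrightarrow> Y \<in> tensor_space sV sW \<Longrightarrow>
    tensor_coord b (tensor_add sV sW X Y) = tensor_coord b X + tensor_coord b Y"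
  unfolding tensor_add_def
  by (simp add: tensor_coord_cls free_space_add tensor_space_rep(1) coordinate_add) (simp add: tensor_coord_def)

lemma tensor_coord_scale:
  "X \<in> tensor_space sV sW \<Longrightarrow> tensor_coord b (tensor_scale sV sW c X) = sW c (tensor_coord b X)"
  unfolding tensor_scale_def
  by (simp add: tensor_coord_cls free_space_scale tensor_space_rep(1) coordinate_scale) (simp add: tensor_coord_def)

lemma tensor_coord_act_annihilated:
  assumes "Vector_Spaces.linear sV sV (aV h)" "\<And>v. aV h v = 0" "Vector_Spaces.linear sW sW (aW h)"
    and X: "X \<in> tensor_space sV sW"
  shows "tensor_coord b (tensor_act sV sW aV aW h X) = aW h (tensor_coord b X)"
proof -
  obtain f where f: "f \<in> free_space" "X = tensor_cls sV sW f"
    using X by (auto simp: tensor_space_def)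
  let ?A = "\<lambda>(v, w). delta (0, w) + delta (v, aW h w)"
  have act: "tensor_act sV sW aV aW h (tensor_cls sV sW f) = tensor_cls sV sW (lin_ext ?A f)"
    using tensor_act_cls[where aU=aV and aW=aW and h=h, OF V.vector_space_axioms W.vector_space_axioms
        assms(1,3) f(1)]
    by (simp add: assms(2))
  have "lin_ext ?A f \<in> free_space"
    unfolding lin_ext_eq_free_ext by (rule free_ext_in_free_space) (simp add: case_prod_beta free_space_add)
  then show ?thesis
    by (simp only: f(2) act tensor_coord_cls coordinate_lin_ext_annihilated[OF assms(3) f(1)] f(1))
qed

lemma finite_tensor_coord_support:
  assumes "X \<in> tensor_space sV sW"
  shows "finite {b. tensor_coord b X \<noteq> 0}"
proof (rule finite_subset)
  show "{b. tensor_coord b X \<noteq> 0}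
      \<subseteq> (\<Union>q\<in>{q. tensor_rep X q \<noteq> 0}. {b. V.representation B (fst q) b \<noteq> 0})"
    unfolding tensor_coord_def using coordinate_nonzero by blast
  show "finite (\<Union>q\<in>{q. tensor_rep X q \<noteq> 0}. {b. V.representation B (fst q) b \<noteq> 0})"
    using finite_free_support[OF tensor_space_rep(1)[OF assms]] V.finite_representation by blast
qed

lemma tensor_coord_nonzero_imp_basis: "tensor_coord b X \<noteq> 0 \<Longrightarrow> b \<in> B"
  unfolding tensor_coord_def using coordinate_nonzero V.representation_ne_zero by blast

lemma tensor_space_eqI:
  assumes "X \<in> tensor_space sV sW" "Y \<in> tensor_space sV sW"
    and "\<And>b. tensor_coord b X = tensor_coord b Y"
  shows "X = Y"
proof -
  obtain f g where f: "f \<in> free_space" "X = tensor_cls sV sW f"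
    and g: "g \<in> free_space" "Y = tensor_cls sV sW g"
    using assms(1,2) by (auto simp: tensor_space_def)
  have "f - g \<in> tensor_null sV sW"
    using assms(3) f g
    by (intro tensor_null_if_coordinates_zero) (simp_all add: free_space_diff coordinate_diff tensor_coord_cls)
  then show ?thesis using f g tensor_cls_eq by blast
qed

lemma pure_tensor_left_cancel:
  assumes "w \<noteq> 0" and "pure_tensor sV sW u w = pure_tensor sV sW v w"
  shows "u = v"
proof (rule representation_inj)
  fix b
  have "sW (V.representation B u b) w = sW (V.representation B v b) w"
    using arg_cong[OF assms(2), of "tensor_coord b"] by (simp add: tensor_coord_pure)
  then show "V.representation B u b = V.representation B v b" using assms(1) by simp
qed

end

section \<open>Module maps between tensor products with \<open>W\<close>\<close>

locale equivariant_tensor_hom = tensor_coordinates sU2 sW B + U: vector_space sU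
  for sU2 :: "'k::field \<Rightarrow> 'u2::ab_group_add \<Rightarrow> 'u2" and sW :: "'k \<Rightarrow> 'w::ab_group_add \<Rightarrow> 'w"
    and B :: "'u2 set" and sU :: "'k \<Rightarrow> 'u::ab_group_add \<Rightarrow> 'u" +
  fixes aU :: "'g \<Rightarrow> 'u \<Rightarrow> 'u" and aU2 :: "'g \<Rightarrow> 'u2 \<Rightarrow> 'u2" and aW :: "'g \<Rightarrow> 'w \<Rightarrow> 'w"
    and I :: "'g set" and \<phi> :: "('u \<times> 'w \<Rightarrow> 'k) set \<Rightarrow> ('u2 \<times> 'w \<Rightarrow> 'k) set"
  assumes linear_aU: "Vector_Spaces.linear sU sU (aU h)"
    and linear_aU2: "Vector_Spaces.linear sU2 sU2 (aU2 h)"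
    and linear_aW: "Vector_Spaces.linear sW sW (aW h)"
    and aU_annihilated: "i \<in> I \<Longrightarrow> aU i u = 0"
    and aU2_annihilated: "i \<in> I \<Longrightarrow> aU2 i v = 0"
    and endo_scalar: "endo_scalar sW I aW"
    and W_nontrivial: "\<exists>w::'w. w \<noteq> 0"
    and hom: "tensor_module_hom sU aU sU2 aU2 sW aW \<phi>"
begin

lemma phi_in_space: "X \<in> tensor_space sU sW \<Longrightarrow> \<phi> X \<in> tensor_space sU2 sW"
  and phi_add: "X \<in> tensor_space sU sW \<Longrightarrow> Y \<in> tensor_space sU sW \<Longrightarrow>
      \<phi> (tensor_add sU sW X Y) = tensor_add sU2 sW (\<phi> X) (\<phi> Y)"
  and phi_scale: "X \<in> tensor_space sU sW \<Longrightarrow> \<phi> (tensor_scale sU sW c X) = tensor_scale sU2 sW c (\<phi> X)"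
  and phi_act: "X \<in> tensor_space sU sW \<Longrightarrow>
      \<phi> (tensor_act sU sW aU aW h X) = tensor_act sU2 sW aU2 aW h (\<phi> X)"
  using hom unfolding tensor_module_hom_def by blast+

lemma linear_coord_phi_pure: "Vector_Spaces.linear sW sW (\<lambda>w. tensor_coord b (\<phi> (pure_tensor sU sW u w)))"
proof unfold_locales
  fix w1 w2
  show "tensor_coord b (\<phi> (pure_tensor sU sW u (w1 + w2)))
      = tensor_coord b (\<phi> (pure_tensor sU sW u w1)) + tensor_coord b (\<phi> (pure_tensor sU sW u w2))"
    by (simp flip: pure_tensor_add_right
        add: phi_add pure_tensor_in_space phi_in_space tensor_coord_add)
next
  fix c w
  show "tensor_coord b (\<phi> (pure_tensor sU sW u (sW c w))) = sW c (tensor_coord b (\<phi> (pure_tensor sU sW u w)))"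
    by (simp flip: pure_tensor_scale_right
        add: phi_scale pure_tensor_in_space phi_in_space tensor_coord_scale)
qed

lemma coord_phi_pure_commute:
  assumes "i \<in> I"
  shows "tensor_coord b (\<phi> (pure_tensor sU sW u (aW i w))) = aW i (tensor_coord b (\<phi> (pure_tensor sU sW u w)))"
proof -
  have "pure_tensor sU sW u (aW i w) = tensor_act sU sW aU aW i (pure_tensor sU sW u w)"
    using tensor_act_pure_annihilated[where aU=aU and aW=aW and h=i, OF U.vector_space_axioms
        W.vector_space_axioms linear_aU linear_aW aU_annihilated[OF assms]]
    by simp
  then show ?thesis
    using assms
    by (simp add: phi_act pure_tensor_in_space phi_in_space tensor_coord_act_annihilated
        linear_aU2 linear_aW aU2_annihilated)
qed

definition coeff :: "'u \<Rightarrow> 'u2 \<Rightarrow> 'k" where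
  "coeff u b = (SOME c. \<forall>w. tensor_coord b (\<phi> (pure_tensor sU sW u w)) = sW c w)"

lemma coord_phi_pure: "tensor_coord b (\<phi> (pure_tensor sU sW u w)) = sW (coeff u b) w"
proof -
  have "\<exists>c. \<forall>w. tensor_coord b (\<phi> (pure_tensor sU sW u w)) = sW c w"
    using endo_scalar linear_coord_phi_pure coord_phi_pure_commute unfolding endo_scalar_def by blast
  then show ?thesis unfolding coeff_def by (rule someI_ex[THEN spec])
qed

lemma coeff_support_subset:
  assumes "w \<noteq> 0"
  shows "{b. coeff u b \<noteq> 0} \<subseteq> {b. tensor_coord b (\<phi> (pure_tensor sU sW u w)) \<noteq> 0}"
  using assms by (auto simp: coord_phi_pure)

definition induced_map :: "'u \<Rightarrow> 'u2" where
  "induced_map u = (\<Sum>b | coeff u b \<noteq> 0. sU2 (coeff u b) b)"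

lemma representation_induced_map: "V.representation B (induced_map u) = coeff u"
proof (rule V.representation_eqI[OF basis_independent])
  obtain w :: 'w where "w \<noteq> 0" using W_nontrivial by blast
  note support = coeff_support_subset[OF this, of u]
  show "coeff u b \<noteq> 0 \<Longrightarrow> b \<in> B" for b
    using support tensor_coord_nonzero_imp_basis by blast
  show "finite {b. coeff u b \<noteq> 0}"
    using support by (rule finite_subset) (simp add: finite_tensor_coord_support phi_in_space pure_tensor_in_space)
qed (simp_all add: basis_spans induced_map_def)

lemma phi_pure: "\<phi> (pure_tensor sU sW u w) = pure_tensor sU2 sW (induced_map u) w"
  by (rule tensor_space_eqI)
    (simp_all add: phi_in_space pure_tensor_in_space coord_phi_pure tensor_coord_pure representation_induced_map)

lemma left_factor_eqI:
  assumes "\<And>w. pure_tensor sU2 sW x w = pure_tensor sU2 sW y w"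
  shows "x = y"
proof -
  obtain w :: 'w where "w \<noteq> 0" using W_nontrivial by blast
  then show ?thesis using pure_tensor_left_cancel assms by blast
qed

lemma linear_induced_map: "Vector_Spaces.linear sU sU2 induced_map"
proof unfold_locales
  fix u1 u2
  show "induced_map (u1 + u2) = induced_map u1 + induced_map u2"
    by (rule left_factor_eqI)
      (simp flip: pure_tensor_add_left phi_pure add: phi_add pure_tensor_in_space)
next
  fix c u
  show "induced_map (sU c u) = sU2 c (induced_map u)"
    by (rule left_factor_eqI)
      (simp flip: pure_tensor_scale_left phi_pure add: phi_scale pure_tensor_in_space)
qed

lemma induced_map_commute: "induced_map (aU h u) = aU2 h (induced_map u)"
proof (rule representation_inj)
  fix b
  obtain w :: 'w where w: "w \<noteq> 0" using W_nontrivial by blast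
  have "\<phi> (tensor_act sU sW aU aW h (pure_tensor sU sW u w))
      = tensor_act sU2 sW aU2 aW h (\<phi> (pure_tensor sU sW u w))"
    by (simp add: phi_act pure_tensor_in_space)
  then have "tensor_add sU2 sW (pure_tensor sU2 sW (induced_map (aU h u)) w) (pure_tensor sU2 sW (induced_map u) (aW h w))
      = tensor_add sU2 sW (pure_tensor sU2 sW (aU2 h (induced_map u)) w) (pure_tensor sU2 sW (induced_map u) (aW h w))"
    by (simp add: tensor_act_pure U.vector_space_axioms V.vector_space_axioms W.vector_space_axioms
        linear_aU linear_aU2 linear_aW phi_add pure_tensor_in_space phi_pure)
  from arg_cong[OF this, of "tensor_coord b"]
  have "sW (V.representation B (induced_map (aU h u)) b) w = sW (V.representation B (aU2 h (induced_map u)) b) w"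
    by (simp add: tensor_coord_add tensor_coord_pure pure_tensor_in_space)
  then show "V.representation B (induced_map (aU h u)) b = V.representation B (aU2 h (induced_map u)) b"
    using w by simp
qed

lemma lie_module_hom_induced_map: "lie_module_hom sU aU sU2 aU2 induced_map"
  by (simp add: lie_module_hom_def linear_induced_map induced_map_commute)

lemma phi_eq_tensor_map_left:
  assumes "X \<in> tensor_space sU sW"
  shows "\<phi> X = tensor_map_left sU2 sW induced_map X"
  using assms
proof (induction rule: tensor_space_induct)
  case (pure u w)
  then show ?case by (simp add: phi_pure tensor_map_left_pure W.vector_space_axioms linear_induced_map)
next
  case (add X Y)
  then show ?case by (simp add: phi_add tensor_map_left_add W.vector_space_axioms linear_induced_map)
next
  case (scale c X)
  then show ?case by (simp add: phi_scale tensor_map_left_scale W.vector_space_axioms linear_induced_map)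
qed

lemma induced_map_unique:
  assumes "Vector_Spaces.linear sU sU2 g" and "\<forall>X\<in>tensor_space sU sW. \<phi> X = tensor_map_left sU2 sW g X"
  shows "g = induced_map"
proof
  fix u
  show "g u = induced_map u"
    using assms by (intro left_factor_eqI)
      (simp flip: phi_pure add: tensor_map_left_pure W.vector_space_axioms pure_tensor_in_space)
qed

end

theorem lemma3p1:
  fixes sg :: "'k::field_char_0 \<Rightarrow> 'g::ab_group_add \<Rightarrow> 'g"
    and br :: "'g \<Rightarrow> 'g \<Rightarrow> 'g"
    and I :: "'g set"
    and sU :: "'k \<Rightarrow> 'u::ab_group_add \<Rightarrow> 'u" and aU :: "'g \<Rightarrow> 'u \<Rightarrow> 'u"
    and sU2 :: "'k \<Rightarrow> 'u2::ab_group_add \<Rightarrow> 'u2" and aU2 :: "'g \<Rightarrow> 'u2 \<Rightarrow> 'u2"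
    and sW :: "'k \<Rightarrow> 'w::ab_group_add \<Rightarrow> 'w" and aW :: "'g \<Rightarrow> 'w \<Rightarrow> 'w"
    and \<phi> :: "('u \<times> 'w \<Rightarrow> 'k) set \<Rightarrow> ('u2 \<times> 'w \<Rightarrow> 'k) set"
  assumes "lie_algebra sg br"
    and "lie_ideal sg br I"
    and "lie_module sg br sU aU" and "\<forall>i\<in>I. \<forall>u. aU i u = 0"
    and "lie_module sg br sU2 aU2" and "\<forall>i\<in>I. \<forall>u. aU2 i u = 0"
    and "lie_module sg br sW aW"
    and "acts_densely I aW"
    and "irreducible_under sW I aW"
    and "endo_scalar sW I aW"
    and "tensor_module_hom sU aU sU2 aU2 sW aW \<phi>"
  shows "\<exists>!g. lie_module_hom sU aU sU2 aU2 g
            \<and> (\<forall>X\<in>tensor_space sU sW. \<phi> X = tensor_map_left sU2 sW g X)"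
proof -
  have U: "vector_space sU" "\<And>h. Vector_Spaces.linear sU sU (aU h)"
    and U2: "vector_space sU2" "\<And>h. Vector_Spaces.linear sU2 sU2 (aU2 h)"
    and W: "vector_space sW" "\<And>h. Vector_Spaces.linear sW sW (aW h)"
    using assms(3,5,7) by (simp_all add: lie_module_def)
  interpret U2: vector_space sU2 by (rule U2(1))
  obtain B where B: "\<not> U2.dependent B" "UNIV \<subseteq> U2.span B"
    using U2.basis_exists[of UNIV] by blast
  obtain w0 :: 'w where "w0 \<noteq> 0" using assms(9) unfolding irreducible_under_def by blast
  have "U2.span B = UNIV" using B(2) by auto
  with U U2(2) W B(1) assms(4,6,10,11) \<open>w0 \<noteq> 0\<close>
  interpret equivariant_tensor_hom sU2 sW B sU aU aU2 aW I \<phi>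
    by (intro equivariant_tensor_hom.intro tensor_coordinates.intro tensor_coordinates_axioms.intro
        equivariant_tensor_hom_axioms.intro U2(1)) auto
  show ?thesis
  proof (rule ex1I[of _ induced_map])
    show "lie_module_hom sU aU sU2 aU2 induced_map
        \<and> (\<forall>X\<in>tensor_space sU sW. \<phi> X = tensor_map_left sU2 sW induced_map X)"
      by (simp add: lie_module_hom_induced_map phi_eq_tensor_map_left)
  qed (simp add: lie_module_hom_def induced_map_unique)
qed

end
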